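(* Let $\mathcal{X}$ and $\mathcal{Y}$ be finite sets with $2 \le |\mathcal{X}|,|\mathcal{Y}| < \infty$, and let $X,Y$ have joint pmf $P_{X,Y}$ with $P_X(x)>0$ for all $x\in\mathcal{X}$ and $P_Y(y)>0$ for all $y\in\mathcal{Y}$. Let $f:(0,\infty)\to\mathbb{R}$ be convex, strictly convex and thrice differentiable at $1$, with $f(1)=0$ and $f''(1)>0$, such that for every $t\in(0,\infty)$, $$\bigl(f(t)-f'(1)(t-1)\bigr)\left(1-\frac{f'''(1)}{3f''(1)}(t-1)\right)\ge \frac{f''(1)}{2}(t-1)^2 .$$ Suppose further that the function $g:(0,\infty)\to\mathbb{R}$, $g(x)=\frac{f(x)-f(0)}{x}$ with $f(0)=\lim_{t\to0^+}f(t)$, is concave. Then $$\eta_{\chi^2}(P_X,P_{Y|X})\le\eta_f(P_X,P_{Y|X})\le \frac{f'(1)+f(0)}{f''(1)\min_{x\in\mathcal{X}}P_X(x)}\,\eta_{\chi^2}(P_X,P_{Y|X}).$$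
   Context: Let $W$ be the column stochastic matrix of the channel $P_{Y|X}$ (its $x$th column is $P_{Y|X=x}$), mapping a pmf $R_X$ on $\mathcal{X}$ to $WR_X$. Strict convexity at $1$ means $\lambda f(x)+(1-\lambda)f(y)>f(1)$ whenever $\lambda\in(0,1)$, $x,y>0$, $\lambda x+(1-\lambda)y=1$. The $f$-divergence is $D_f(R_X\|P_X)=\sum_x P_X(x)f(R_X(x)/P_X(x))$ with conventions $f(0)=\lim_{t\to0^+}f(t)$, $0f(0/0)=0$, $0f(r/0)=r\lim_{p\to0^+}pf(1/p)$ for $r>0$. The $\chi^2$-divergence is $\chi^2(R_X\|P_X)=\sum_x (R_X(x)-P_X(x))^2/P_X(x)$ (the case $f(t)=t^2-1$). The contraction coefficient is $\eta_f(P_X,P_{Y|X})=\sup\{D_f(WR_X\|WP_X)/D_f(R_X\|P_X): R_X \text{ a pmf on } \mathcal{X},\ 0<D_f(R_X\|P_X)<\infty\}$, and $\eta_{\chi^2}$ is this coefficient for the $\chi^2$-divergence. *)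

theory Defs
  imports "HOL-Analysis.Analysis"
begin

definition is_pmf :: "('a::finite \<Rightarrow> real) \<Rightarrow> bool" where
  "is_pmf R \<longleftrightarrow> (\<forall>x. 0 \<le> R x) \<and> (\<Sum>x\<in>UNIV. R x) = 1"

definition fzero :: "(real \<Rightarrow> real) \<Rightarrow> real" where
  "fzero f = Lim (at_right 0) f"

definition fext :: "(real \<Rightarrow> real) \<Rightarrow> real \<Rightarrow> real" where
  "fext f t = (if t = 0 then fzero f else f t)"

text \<open>f-divergence D_f(R||Q) = sum_x Q(x) f(R(x)/Q(x)); the reference measures used
  below always have full support, so the conventions for Q(x)=0 never arise
  (they are encoded as 0 when R x = 0; the case R x > 0 = Q x does not occur).\<close>
definition fdiv :: "(real \<Rightarrow> real) \<Rightarrow> ('a::finite \<Rightarrow> real) \<Rightarrow> ('a \<Rightarrow> real) \<Rightarrow> real" where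
  "fdiv f R Q = (\<Sum>x\<in>UNIV. if Q x = 0 then 0 else Q x * fext f (R x / Q x))"

definition chi2div :: "('a::finite \<Rightarrow> real) \<Rightarrow> ('a \<Rightarrow> real) \<Rightarrow> real" where
  "chi2div R Q = (\<Sum>x\<in>UNIV. (R x - Q x)^2 / Q x)"

text \<open>Marginal of X, and column-stochastic channel matrix W y x = P_{Y|X}(y|x).\<close>
definition marg_X :: "('x::finite \<Rightarrow> 'y::finite \<Rightarrow> real) \<Rightarrow> 'x \<Rightarrow> real" where
  "marg_X P x = (\<Sum>y\<in>UNIV. P x y)"

definition marg_Y :: "('x::finite \<Rightarrow> 'y::finite \<Rightarrow> real) \<Rightarrow> 'y \<Rightarrow> real" where
  "marg_Y P y = (\<Sum>x\<in>UNIV. P x y)"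

definition channel :: "('x::finite \<Rightarrow> 'y::finite \<Rightarrow> real) \<Rightarrow> 'y \<Rightarrow> 'x \<Rightarrow> real" where
  "channel P y x = P x y / marg_X P x"

definition chmap :: "('y \<Rightarrow> 'x::finite \<Rightarrow> real) \<Rightarrow> ('x \<Rightarrow> real) \<Rightarrow> 'y \<Rightarrow> real" where
  "chmap W R = (\<lambda>y. \<Sum>x\<in>UNIV. W y x * R x)"

text \<open>Contraction coefficient for a divergence D (extended-real supremum; all
  divergences here are finite reals, so 0 < D < infinity reduces to 0 < D).\<close>
definition contraction ::
  "(('x::finite \<Rightarrow> real) \<Rightarrow> ('x \<Rightarrow> real) \<Rightarrow> real) \<Rightarrow> (('y \<Rightarrow> real) \<Rightarrow> ('y \<Rightarrow> real) \<Rightarrow> real)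
    \<Rightarrow> ('x \<Rightarrow> real) \<Rightarrow> ('y \<Rightarrow> 'x \<Rightarrow> real) \<Rightarrow> ereal" where
  "contraction DX DY PX W =
     (SUP R\<in>{R. is_pmf R \<and> 0 < DX R PX}. ereal (DY (chmap W R) (chmap W PX) / DX R PX))"

definition eta_f :: "(real \<Rightarrow> real) \<Rightarrow> ('x::finite \<Rightarrow> real) \<Rightarrow> ('y::finite \<Rightarrow> 'x \<Rightarrow> real) \<Rightarrow> ereal" where
  "eta_f f PX W = contraction (fdiv f) (fdiv f) PX W"

definition eta_chi2 :: "('x::finite \<Rightarrow> real) \<Rightarrow> ('y::finite \<Rightarrow> 'x \<Rightarrow> real) \<Rightarrow> ereal" where
  "eta_chi2 PX W = contraction chi2div chi2div PX W"

definition strictly_convex_at_1 :: "(real \<Rightarrow> real) \<Rightarrow> bool" where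
  "strictly_convex_at_1 f \<longleftrightarrow>
     (\<forall>l x y. 0 < l \<and> l < 1 \<and> 0 < x \<and> 0 < y \<and> l * x + (1 - l) * y = 1 \<longrightarrow>
        l * f x + (1 - l) * f y > f 1)"

end

theory Submission
  imports Defs
begin

(* Lower bound: for R_eps = P_X + eps (R - P_X), the second-order expansion of f at 1 gives
   D_f(R_eps || P_X) = eps^2 f''(1)/2 chi^2(R || P_X) + o(eps^2), and likewise at the output, since
   W is linear and W P_X = P_Y. Hence the f-ratios of R_eps tend to the chi^2-ratio of R.

   Upper bound: the concave function g lies below its tangent at 1, which gives
   f(t) - f'(1)(t - 1) <= (f'(1) + f(0)) (t - 1)^2 and so D_f <= (f'(1) + f(0)) chi^2 at the output.
   At the input, the cubic hypothesis and Cauchy-Schwarz with the weights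
   P_X(x) - c (R(x) - P_X(x)), c = f'''(1)/(3 f''(1)), which sum to 1, give the Pinsker-type bound
   D_f(R || P_X) >= f''(1)/2 ||R - P_X||_1^2 >= f''(1) min P_X chi^2(R || P_X). *)

definition column_stochastic :: "('y::finite \<Rightarrow> 'x \<Rightarrow> real) \<Rightarrow> bool" where
  "column_stochastic W \<longleftrightarrow> (\<forall>y x. 0 \<le> W y x) \<and> (\<forall>x. (\<Sum>y\<in>UNIV. W y x) = 1)"

lemma second_order_remainder_tendsto:
  fixes f f' :: "real \<Rightarrow> real"
  assumes "e > 0"
    and f': "\<forall>t\<in>ball x e. (f has_real_derivative f' t) (at t)"
    and f'': "(f' has_real_derivative f'') (at x)"
  shows "((\<lambda>s. (f (x + s) - f x - f' x * s) / s^2) \<longlongrightarrow> f'' / 2) (at 0)"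
proof (rule lhopital[where f' = "\<lambda>s. f' (x + s) - f' x" and g' = "\<lambda>s. 2 * s"])
  have "isCont f x"
    using f' \<open>e > 0\<close> by (auto intro: DERIV_isCont)
  then have "((\<lambda>s. f (x + s)) \<longlongrightarrow> f x) (at 0)"
    by (simp add: isCont_def LIM_offset_zero)
  then have "((\<lambda>s. f (x + s) - f x - f' x * s) \<longlongrightarrow> f x - f x - f' x * 0) (at 0)"
    by (intro tendsto_intros)
  then show "((\<lambda>s. f (x + s) - f x - f' x * s) \<longlongrightarrow> 0) (at 0)"
    by simp
  show "((\<lambda>s::real. s^2) \<longlongrightarrow> 0) (at 0)"
    by (auto intro!: tendsto_eq_intros)
  show "eventually (\<lambda>s::real. s^2 \<noteq> 0) (at 0)" "eventually (\<lambda>s::real. 2 * s \<noteq> 0) (at 0)"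
    by (auto simp: eventually_at_filter)
  have "eventually (\<lambda>s. s \<in> ball 0 e) (at (0::real))"
    using \<open>e > 0\<close> by (intro eventually_at_in_open') auto
  then show "eventually (\<lambda>s. DERIV (\<lambda>s. f (x + s) - f x - f' x * s) s :> f' (x + s) - f' x) (at 0)"
  proof (rule eventually_mono)
    fix s :: real
    assume "s \<in> ball 0 e"
    then have "(f has_real_derivative f' (x + s)) (at (x + s))"
      using f' by (auto simp: dist_real_def)
    then show "DERIV (\<lambda>s. f (x + s) - f x - f' x * s) s :> f' (x + s) - f' x"
      by (auto intro!: derivative_eq_intros DERIV_chain2[where f = f])
  qed
  show "eventually (\<lambda>s::real. DERIV (\<lambda>s. s^2) s :> 2 * s) (at 0)"
    by (auto intro!: derivative_eq_intros always_eventually)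
  have "((\<lambda>s. (f' (x + s) - f' x) / s) \<longlongrightarrow> f'') (at 0)"
    using f'' by (simp add: DERIV_def)
  then have "((\<lambda>s. (f' (x + s) - f' x) / s / 2) \<longlongrightarrow> f'' / 2) (at 0)"
    by (intro tendsto_intros) auto
  then show "((\<lambda>s. (f' (x + s) - f' x) / (2 * s)) \<longlongrightarrow> f'' / 2) (at 0)"
    by (simp add: field_simps)
qed

lemma second_order_expansion:
  fixes f f' :: "real \<Rightarrow> real"
  assumes "e > 0"
    and "\<forall>t\<in>ball x e. (f has_real_derivative f' t) (at t)"
    and "(f' has_real_derivative f'') (at x)"
  obtains \<phi> where "isCont \<phi> 0" and "\<phi> 0 = f'' / 2"
    and "\<And>s. f (x + s) = f x + f' x * s + s^2 * \<phi> s"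
proof
  define \<phi> where "\<phi> s = (if s = 0 then f'' / 2 else (f (x + s) - f x - f' x * s) / s^2)" for s
  have "eventually (\<lambda>s. (f (x + s) - f x - f' x * s) / s^2 = \<phi> s) (at (0::real))"
    by (simp add: \<phi>_def eventually_at_filter)
  then have "(\<phi> \<longlongrightarrow> f'' / 2) (at 0)"
    using Lim_transform_eventually second_order_remainder_tendsto[OF assms] by blast
  then show "isCont \<phi> 0"
    by (simp add: isCont_def \<phi>_def)
  show "\<phi> 0 = f'' / 2" "f (x + s) = f x + f' x * s + s^2 * \<phi> s" for s
    by (simp_all add: \<phi>_def)
qed

lemma tendsto_fzero:
  assumes "\<exists>L. (f \<longlongrightarrow> L) (at_right 0)"
  shows "(f \<longlongrightarrow> fzero f) (at_right 0)"
  using assms tendsto_Lim[OF trivial_limit_at_right_real] unfolding fzero_def by metis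

lemma fext_ge_tangent:
  fixes f :: "real \<Rightarrow> real"
  assumes "convex_on {0<..} f" and "(f has_real_derivative k) (at 1)"
    and "(f \<longlongrightarrow> fzero f) (at_right 0)" and "t \<ge> 0"
  shows "f 1 + k * (t - 1) \<le> fext f t"
proof -
  have tangent: "f 1 + k * (s - 1) \<le> f s" if "s > 0" for s
    using convex_on_imp_above_tangent[OF assms(1), of 1 s k] that assms(2)
    by (auto simp: interior_open convex_connected has_field_derivative_at_within)
  have "((\<lambda>s. f s - k * (s - 1)) \<longlongrightarrow> fzero f - k * (0 - 1)) (at_right 0)"
    by (intro tendsto_intros assms(3) tendsto_ident_at)
  then have "f 1 \<le> fzero f - k * (0 - 1)"
    by (rule tendsto_lowerbound)
       (use eventually_at_right_less[of "0::real"] tangent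
         in \<open>auto elim!: eventually_mono simp: algebra_simps\<close>)
  then show ?thesis
    using tangent \<open>t \<ge> 0\<close> by (cases "t = 0") (auto simp: fext_def)
qed

lemma fext_cubic_lower_bound:
  fixes f :: "real \<Rightarrow> real"
  assumes "(f \<longlongrightarrow> fzero f) (at_right 0)"
    and bound: "\<And>s. s > 0 \<Longrightarrow> a / 2 * (s - 1)^2 \<le> (f s - k * (s - 1)) * (1 - c * (s - 1))"
    and "t \<ge> 0"
  shows "a / 2 * (t - 1)^2 \<le> (fext f t - k * (t - 1)) * (1 - c * (t - 1))"
proof -
  have "((\<lambda>s. (f s - k * (s - 1)) * (1 - c * (s - 1)))
          \<longlongrightarrow> (fzero f - k * (0 - 1)) * (1 - c * (0 - 1))) (at_right 0)"
    by (intro tendsto_intros assms(1) tendsto_ident_at)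
  moreover have "((\<lambda>s. a / 2 * (s - 1)^2) \<longlongrightarrow> a / 2 * (0 - 1)^2) (at_right 0)"
    by (intro tendsto_intros tendsto_ident_at)
  ultimately have "a / 2 * (0 - 1)^2 \<le> (fzero f - k * (0 - 1)) * (1 - c * (0 - 1))"
    by (rule tendsto_le[OF trivial_limit_at_right_real])
       (use eventually_at_right_less[of "0::real"] bound in \<open>auto elim: eventually_mono\<close>)
  then show ?thesis
    using bound \<open>t \<ge> 0\<close> by (cases "t = 0") (auto simp: fext_def)
qed

lemma fext_le_quadratic:
  fixes f :: "real \<Rightarrow> real"
  assumes concave: "concave_on {0<..} (\<lambda>x. (f x - fzero f) / x)"
    and f': "(f has_real_derivative k) (at 1)" and "f 1 = 0" and "t \<ge> 0"
  shows "fext f t - k * (t - 1) \<le> (k + fzero f) * (t - 1)^2"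
proof (cases "t = 0")
  case True
  then show ?thesis by (simp add: fext_def)
next
  case False
  define g where "g x = (f x - fzero f) / x" for x
  have "((\<lambda>x. - g x) has_real_derivative - (k + fzero f)) (at 1)"
    using f' \<open>f 1 = 0\<close> unfolding g_def by (auto intro!: derivative_eq_intros)
  moreover have "convex_on {0<..} (\<lambda>x. - g x)"
    using concave by (simp add: concave_on_def g_def)
  ultimately have "- g 1 + - (k + fzero f) * (t - 1) \<le> - g t"
    using convex_on_imp_above_tangent[of "{0<..}" "\<lambda>x. - g x" 1 t "- (k + fzero f)"] False \<open>t \<ge> 0\<close>
    by (auto simp: interior_open convex_connected has_field_derivative_at_within)
  then have "(f t - fzero f) / t \<le> - fzero f + (k + fzero f) * (t - 1)"
    using \<open>f 1 = 0\<close> by (simp add: g_def algebra_simps)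
  then have "f t - fzero f \<le> t * (- fzero f + (k + fzero f) * (t - 1))"
    using False \<open>t \<ge> 0\<close> by (simp add: divide_le_eq mult.commute)
  then show ?thesis
    using False by (simp add: fext_def algebra_simps power2_eq_square)
qed

lemma fdiv_eq_sum:
  assumes "\<forall>x. Q x > 0"
  shows "fdiv f R Q = (\<Sum>x\<in>UNIV. Q x * fext f (R x / Q x))"
  unfolding fdiv_def using assms by (intro sum.cong refl) (metis less_irrefl)

lemma fdiv_eq_sum_shifted:
  fixes Q R :: "'a::finite \<Rightarrow> real"
  assumes "\<forall>x. Q x > 0" and "sum R UNIV = sum Q UNIV"
  shows "fdiv f R Q = (\<Sum>x\<in>UNIV. Q x * (fext f (R x / Q x) - k * (R x / Q x - 1)))"
proof -
  have "(\<Sum>x\<in>UNIV. Q x * (fext f (R x / Q x) - k * (R x / Q x - 1)))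
      = (\<Sum>x\<in>UNIV. Q x * fext f (R x / Q x) - k * (R x - Q x))"
  proof (rule sum.cong[OF refl])
    fix x
    have "Q x > 0"
      using assms(1) by blast
    then show "Q x * (fext f (R x / Q x) - k * (R x / Q x - 1)) = Q x * fext f (R x / Q x) - k * (R x - Q x)"
      by (simp add: field_simps)
  qed
  also have "\<dots> = (\<Sum>x\<in>UNIV. Q x * fext f (R x / Q x)) - k * (\<Sum>x\<in>UNIV. R x - Q x)"
    by (simp add: sum_subtractf flip: sum_distrib_left)
  also have "(\<Sum>x\<in>UNIV. R x - Q x) = 0"
    using assms(2) by (simp add: sum_subtractf)
  finally show ?thesis
    using fdiv_eq_sum[OF assms(1)] by simp
qed

lemma chi2div_eq_sum_ratio:
  assumes "\<forall>x. Q x > 0"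
  shows "chi2div R Q = (\<Sum>x\<in>UNIV. Q x * (R x / Q x - 1)^2)"
  unfolding chi2div_def using assms
  by (intro sum.cong refl) (simp add: field_simps power2_eq_square)

lemma chi2div_nonneg:
  assumes "\<forall>x. Q x > 0"
  shows "0 \<le> chi2div R Q"
  unfolding chi2div_def using assms by (intro sum_nonneg divide_nonneg_pos) auto

lemma fdiv_le_chi2div:
  fixes Q R :: "'a::finite \<Rightarrow> real"
  assumes Q: "\<forall>x. Q x > 0" and R: "\<forall>x. R x \<ge> 0" and "sum R UNIV = sum Q UNIV"
    and upper: "\<And>t. t \<ge> 0 \<Longrightarrow> fext f t - k * (t - 1) \<le> K * (t - 1)^2"
  shows "fdiv f R Q \<le> K * chi2div R Q"
proof -
  have "fdiv f R Q = (\<Sum>x\<in>UNIV. Q x * (fext f (R x / Q x) - k * (R x / Q x - 1)))"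
    using fdiv_eq_sum_shifted[OF Q \<open>sum R UNIV = sum Q UNIV\<close>] .
  also have "\<dots> \<le> (\<Sum>x\<in>UNIV. Q x * (K * (R x / Q x - 1)^2))"
    using Q R by (intro sum_mono mult_left_mono upper) (auto simp: less_imp_le)
  also have "\<dots> = K * chi2div R Q"
    unfolding chi2div_eq_sum_ratio[OF Q] sum_distrib_left by (simp add: mult.left_commute)
  finally show ?thesis .
qed

lemma sum_abs_squared_le_weighted:
  fixes d B :: "'a \<Rightarrow> real"
  assumes "finite A" and "\<forall>x\<in>A. B x > 0" and "sum B A = 1"
  shows "(\<Sum>x\<in>A. \<bar>d x\<bar>)^2 \<le> (\<Sum>x\<in>A. (d x)^2 / B x)"
proof -
  define S where "S = (\<Sum>x\<in>A. \<bar>d x\<bar>)"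
  have "0 \<le> (\<Sum>x\<in>A. (\<bar>d x\<bar> - S * B x)^2 / B x)"
    using assms(2) by (intro sum_nonneg divide_nonneg_pos) auto
  also have "\<dots> = (\<Sum>x\<in>A. (d x)^2 / B x - 2 * S * \<bar>d x\<bar> + S^2 * B x)"
  proof (rule sum.cong[OF refl])
    fix x
    assume "x \<in> A"
    then have "B x > 0"
      using assms(2) by blast
    then show "(\<bar>d x\<bar> - S * B x)^2 / B x = (d x)^2 / B x - 2 * S * \<bar>d x\<bar> + S^2 * B x"
      by (simp add: field_simps power2_eq_square)
  qed
  also have "\<dots> = (\<Sum>x\<in>A. (d x)^2 / B x) - S^2"
    using assms(3)
    by (simp add: sum.distrib sum_subtractf sum_distrib_left[symmetric] S_def power2_eq_square)
  finally show ?thesis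
    by (simp add: S_def)
qed

lemma weighted_square_le:
  fixes h :: "real \<Rightarrow> real"
  assumes "q > 0" and "r \<ge> 0" and "a > 0"
    and h_nonneg: "\<And>t. t \<ge> 0 \<Longrightarrow> 0 \<le> h t"
    and h_bound: "\<And>t. t \<ge> 0 \<Longrightarrow> a / 2 * (t - 1)^2 \<le> h t * (1 - c * (t - 1))"
  shows "q - c * (r - q) > 0" and "a / 2 * (r - q)^2 / (q - c * (r - q)) \<le> q * h (r / q)"
proof -
  define b where "b = q - c * (r - q)"
  have t: "r / q \<ge> 0" "1 - c * (r / q - 1) = b / q" "r / q - 1 = (r - q) / q"
    using \<open>q > 0\<close> \<open>r \<ge> 0\<close> by (simp_all add: b_def diff_divide_distrib right_diff_distrib)
  have bound: "a / 2 * ((r - q) / q)^2 \<le> h (r / q) * (b / q)"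
    using h_bound[OF t(1)] unfolding t(2) unfolding t(3) .
  show "b > 0"
  proof (cases "r = q")
    case False
    then have "0 < a / 2 * ((r - q) / q)^2"
      using \<open>a > 0\<close> \<open>q > 0\<close> by simp
    then have "0 < h (r / q) * (b / q)"
      using bound by linarith
    then show ?thesis
      using h_nonneg[OF t(1)] \<open>q > 0\<close> by (simp add: zero_less_mult_iff zero_less_divide_iff)
  qed (use \<open>q > 0\<close> in \<open>simp add: b_def\<close>)
  then have "a / 2 * (r - q)^2 / b = a / 2 * ((r - q) / q)^2 * q^2 / b"
    using \<open>q > 0\<close> by (simp add: field_simps)
  also have "\<dots> \<le> h (r / q) * (b / q) * q^2 / b"
    using bound \<open>b > 0\<close> by (intro divide_right_mono mult_right_mono) auto
  also have "\<dots> = q * h (r / q)"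
    using \<open>q > 0\<close> \<open>b > 0\<close> by (simp add: field_simps power2_eq_square)
  finally show "a / 2 * (r - q)^2 / (q - c * (r - q)) \<le> q * h (r / q)"
    by (simp add: b_def)
qed

lemma pinsker_type_inequality:
  fixes Q R :: "'a::finite \<Rightarrow> real" and h :: "real \<Rightarrow> real"
  assumes Q: "\<forall>x. Q x > 0" "sum Q UNIV = 1" and R: "\<forall>x. R x \<ge> 0" "sum R UNIV = 1"
    and "a > 0"
    and h_nonneg: "\<And>t. t \<ge> 0 \<Longrightarrow> 0 \<le> h t"
    and h_bound: "\<And>t. t \<ge> 0 \<Longrightarrow> a / 2 * (t - 1)^2 \<le> h t * (1 - c * (t - 1))"
  shows "a / 2 * (\<Sum>x\<in>UNIV. \<bar>R x - Q x\<bar>)^2 \<le> (\<Sum>x\<in>UNIV. Q x * h (R x / Q x))"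
proof -
  define B where "B x = Q x - c * (R x - Q x)" for x
  have weighted: "B x > 0" "a / 2 * (R x - Q x)^2 / B x \<le> Q x * h (R x / Q x)" for x
    unfolding B_def using Q(1) R(1)
    by (blast intro: weighted_square_le[OF _ _ \<open>a > 0\<close> h_nonneg h_bound])+
  have "sum B UNIV = 1"
    using Q(2) R(2) by (simp add: B_def sum_subtractf sum_distrib_left[symmetric])
  then have "(\<Sum>x\<in>UNIV. \<bar>R x - Q x\<bar>)^2 \<le> (\<Sum>x\<in>UNIV. (R x - Q x)^2 / B x)"
    using weighted(1) by (intro sum_abs_squared_le_weighted) auto
  then have "a / 2 * (\<Sum>x\<in>UNIV. \<bar>R x - Q x\<bar>)^2 \<le> a / 2 * (\<Sum>x\<in>UNIV. (R x - Q x)^2 / B x)"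
    using \<open>a > 0\<close> by simp
  also have "\<dots> = (\<Sum>x\<in>UNIV. a / 2 * (R x - Q x)^2 / B x)"
    by (simp add: sum_distrib_left)
  also have "\<dots> \<le> (\<Sum>x\<in>UNIV. Q x * h (R x / Q x))"
    using weighted(2) by (rule sum_mono)
  finally show ?thesis .
qed

text \<open>Since the deviations \<open>R x - Q x\<close> sum to zero, each one is at most half of their
  \<open>\<ell>\<^sub>1\<close>-norm.\<close>
lemma chi2div_le_L1_squared:
  fixes Q R :: "'a::finite \<Rightarrow> real"
  assumes Q: "\<forall>x. m \<le> Q x" and "m > 0" and "sum R UNIV = sum Q UNIV"
  shows "chi2div R Q \<le> (\<Sum>x\<in>UNIV. \<bar>R x - Q x\<bar>)^2 / (2 * m)"
proof -
  define d where "d x = R x - Q x" for x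
  define S where "S = (\<Sum>x\<in>UNIV. \<bar>d x\<bar>)"
  have half: "2 * \<bar>d x\<bar> \<le> S" for x
  proof -
    have "sum d UNIV = 0"
      using assms(3) by (simp add: d_def sum_subtractf)
    then have "0 = d x + (\<Sum>y\<in>UNIV - {x}. d y)" "S = \<bar>d x\<bar> + (\<Sum>y\<in>UNIV - {x}. \<bar>d y\<bar>)"
      by (simp_all add: S_def sum.remove)
    moreover have "\<bar>\<Sum>y\<in>UNIV - {x}. d y\<bar> \<le> (\<Sum>y\<in>UNIV - {x}. \<bar>d y\<bar>)"
      by (rule sum_abs)
    ultimately show ?thesis
      by linarith
  qed
  have "chi2div R Q = (\<Sum>x\<in>UNIV. (d x)^2 / Q x)"
    by (simp add: chi2div_def d_def)
  also have "\<dots> \<le> (\<Sum>x\<in>UNIV. \<bar>d x\<bar> * (S / 2) / m)"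
  proof (rule sum_mono)
    fix x
    have "(d x)^2 / Q x \<le> (d x)^2 / m"
      using Q[rule_format, of x] \<open>m > 0\<close> by (intro divide_left_mono) auto
    also have "\<dots> = \<bar>d x\<bar> * \<bar>d x\<bar> / m"
      by (simp add: power2_eq_square)
    also have "\<dots> \<le> \<bar>d x\<bar> * (S / 2) / m"
      using half[of x] \<open>m > 0\<close> by (intro divide_right_mono mult_left_mono) auto
    finally show "(d x)^2 / Q x \<le> \<bar>d x\<bar> * (S / 2) / m" .
  qed
  also have "\<dots> = S^2 / (2 * m)"
    by (simp add: sum_divide_distrib[symmetric] sum_distrib_right[symmetric] S_def power2_eq_square)
  finally show ?thesis
    by (simp add: S_def d_def)
qed

lemma chi2div_le_fdiv:
  fixes Q R :: "'a::finite \<Rightarrow> real"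
  assumes Q: "\<forall>x. Q x > 0" "sum Q UNIV = 1" "\<forall>x. m \<le> Q x" "m > 0"
    and R: "\<forall>x. R x \<ge> 0" "sum R UNIV = 1"
    and "a > 0"
    and lower: "\<And>t. t \<ge> 0 \<Longrightarrow> 0 \<le> fext f t - k * (t - 1)"
    and cubic: "\<And>t. t \<ge> 0 \<Longrightarrow> a / 2 * (t - 1)^2 \<le> (fext f t - k * (t - 1)) * (1 - c * (t - 1))"
  shows "a * m * chi2div R Q \<le> fdiv f R Q"
proof -
  have "chi2div R Q \<le> (\<Sum>x\<in>UNIV. \<bar>R x - Q x\<bar>)^2 / (2 * m)"
    using chi2div_le_L1_squared[OF Q(3,4)] Q(2) R(2) by simp
  then have "a * m * chi2div R Q \<le> a * m * ((\<Sum>x\<in>UNIV. \<bar>R x - Q x\<bar>)^2 / (2 * m))"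
    using \<open>a > 0\<close> \<open>m > 0\<close> by (intro mult_left_mono) auto
  also have "\<dots> = a / 2 * (\<Sum>x\<in>UNIV. \<bar>R x - Q x\<bar>)^2"
    using \<open>m > 0\<close> by (simp add: field_simps)
  also have "\<dots> \<le> (\<Sum>x\<in>UNIV. Q x * (fext f (R x / Q x) - k * (R x / Q x - 1)))"
    by (rule pinsker_type_inequality[OF Q(1,2) R \<open>a > 0\<close> lower cubic])
  also have "\<dots> = fdiv f R Q"
    using fdiv_eq_sum_shifted[OF Q(1)] Q(2) R(2) by simp
  finally show ?thesis .
qed

lemma fdiv_perturbation_eq:
  fixes Q R :: "'a::finite \<Rightarrow> real"
  assumes Q: "\<forall>x. Q x > 0" and R: "\<forall>x. R x \<ge> 0" and "sum R UNIV = sum Q UNIV"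
    and "0 < \<epsilon>" "\<epsilon> < 1"
    and expansion: "\<And>s. f (1 + s) = k * s + s^2 * \<phi> s"
  shows "fdiv f (\<lambda>x. Q x + \<epsilon> * (R x - Q x)) Q
       = \<epsilon>^2 * (\<Sum>x\<in>UNIV. Q x * ((R x - Q x) / Q x)^2 * \<phi> (\<epsilon> * ((R x - Q x) / Q x)))"
proof -
  have ratio: "(Q x + \<epsilon> * (R x - Q x)) / Q x = 1 + \<epsilon> * ((R x - Q x) / Q x)" for x
    using Q[rule_format, of x] by (simp add: field_simps)
  have pos: "(Q x + \<epsilon> * (R x - Q x)) / Q x > 0" for x
  proof -
    have "Q x + \<epsilon> * (R x - Q x) = (1 - \<epsilon>) * Q x + \<epsilon> * R x"
      by (simp add: algebra_simps)
    then show ?thesis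
      using Q R \<open>0 < \<epsilon>\<close> \<open>\<epsilon> < 1\<close> by (smt (verit) divide_pos_pos mult_pos_pos mult_nonneg_nonneg)
  qed
  have "fdiv f (\<lambda>x. Q x + \<epsilon> * (R x - Q x)) Q
      = (\<Sum>x\<in>UNIV. k * \<epsilon> * (R x - Q x)
           + \<epsilon>^2 * (Q x * ((R x - Q x) / Q x)^2 * \<phi> (\<epsilon> * ((R x - Q x) / Q x))))"
    unfolding fdiv_eq_sum[OF Q]
  proof (intro sum.cong refl)
    fix x
    have "fext f ((Q x + \<epsilon> * (R x - Q x)) / Q x) = f (1 + \<epsilon> * ((R x - Q x) / Q x))"
      using pos[of x] ratio[of x] by (simp add: fext_def)
    also have "\<dots> = k * (\<epsilon> * ((R x - Q x) / Q x))
        + (\<epsilon> * ((R x - Q x) / Q x))^2 * \<phi> (\<epsilon> * ((R x - Q x) / Q x))"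
      by (rule expansion)
    finally show "Q x * fext f ((Q x + \<epsilon> * (R x - Q x)) / Q x)
        = k * \<epsilon> * (R x - Q x) + \<epsilon>^2 * (Q x * ((R x - Q x) / Q x)^2 * \<phi> (\<epsilon> * ((R x - Q x) / Q x)))"
      using Q[rule_format, of x] by (simp add: field_simps power2_eq_square)
  qed
  also have "\<dots> = k * \<epsilon> * (\<Sum>x\<in>UNIV. R x - Q x)
      + \<epsilon>^2 * (\<Sum>x\<in>UNIV. Q x * ((R x - Q x) / Q x)^2 * \<phi> (\<epsilon> * ((R x - Q x) / Q x)))"
    by (simp add: sum.distrib sum_distrib_left)
  also have "(\<Sum>x\<in>UNIV. R x - Q x) = 0"
    using \<open>sum R UNIV = sum Q UNIV\<close> by (simp add: sum_subtractf)
  finally show ?thesis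
    by simp
qed

lemma fdiv_perturbation_tendsto:
  fixes Q R :: "'a::finite \<Rightarrow> real" and f f' :: "real \<Rightarrow> real"
  assumes Q: "\<forall>x. Q x > 0" and R: "\<forall>x. R x \<ge> 0" and "sum R UNIV = sum Q UNIV"
    and "e > 0" and "\<forall>t\<in>ball 1 e. (f has_real_derivative f' t) (at t)"
    and "(f' has_real_derivative f'') (at 1)" and "f 1 = 0"
  shows "((\<lambda>\<epsilon>. fdiv f (\<lambda>x. Q x + \<epsilon> * (R x - Q x)) Q / \<epsilon>^2) \<longlongrightarrow> f'' / 2 * chi2div R Q)
           (at_right 0)"
proof -
  obtain \<phi> where "isCont \<phi> 0" "\<phi> 0 = f'' / 2" and expansion: "\<And>s. f (1 + s) = f' 1 * s + s^2 * \<phi> s"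
    using second_order_expansion[OF assms(4-6)] \<open>f 1 = 0\<close> by (metis add_0)
  define r where "r x = (R x - Q x) / Q x" for x
  have "((\<lambda>\<epsilon>. \<phi> (\<epsilon> * r x)) \<longlongrightarrow> \<phi> (0 * r x)) (at_right 0)" for x
    by (intro isCont_tendsto_compose[OF _ tendsto_mult] tendsto_intros tendsto_ident_at)
       (use \<open>isCont \<phi> 0\<close> in simp)
  then have "((\<lambda>\<epsilon>. \<Sum>x\<in>UNIV. Q x * (r x)^2 * \<phi> (\<epsilon> * r x))
               \<longlongrightarrow> (\<Sum>x\<in>UNIV. Q x * (r x)^2 * (f'' / 2))) (at_right 0)"
    using \<open>\<phi> 0 = f'' / 2\<close> by (intro tendsto_sum tendsto_mult tendsto_const) auto
  also have "(\<Sum>x\<in>UNIV. Q x * (r x)^2 * (f'' / 2)) = f'' / 2 * chi2div R Q"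
    unfolding chi2div_eq_sum_ratio[OF Q] sum_distrib_left
    using Q by (intro sum.cong refl) (simp add: r_def diff_divide_distrib)
  finally have lim: "((\<lambda>\<epsilon>. \<Sum>x\<in>UNIV. Q x * (r x)^2 * \<phi> (\<epsilon> * r x))
                       \<longlongrightarrow> f'' / 2 * chi2div R Q) (at_right 0)" .
  have "eventually (\<lambda>\<epsilon>. (\<Sum>x\<in>UNIV. Q x * (r x)^2 * \<phi> (\<epsilon> * r x))
                  = fdiv f (\<lambda>x. Q x + \<epsilon> * (R x - Q x)) Q / \<epsilon>^2) (at_right 0)"
    using eventually_at_right_real[OF zero_less_one]
  proof eventually_elim
    case (elim \<epsilon>)
    then show ?case
      using fdiv_perturbation_eq[OF Q R \<open>sum R UNIV = sum Q UNIV\<close> _ _ expansion] by (simp add: r_def)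
  qed
  then show ?thesis
    by (rule Lim_transform_eventually[OF lim])
qed


lemma column_stochastic_channel:
  assumes "\<forall>x y. 0 \<le> P x y" and "\<forall>x. marg_X P x > 0"
  shows "column_stochastic (channel P)"
  using assms unfolding column_stochastic_def channel_def
  by (auto simp: less_imp_neq[symmetric] sum_divide_distrib[symmetric] marg_X_def[symmetric]
      intro: divide_nonneg_pos)

lemma chmap_channel_marg_X:
  assumes "\<forall>x. marg_X P x > 0"
  shows "chmap (channel P) (marg_X P) = marg_Y P"
  using assms by (auto simp: fun_eq_iff chmap_def channel_def marg_Y_def less_imp_neq[symmetric])

lemma chmap_nonneg:
  assumes "column_stochastic W" and "\<forall>x. R x \<ge> 0"
  shows "chmap W R y \<ge> 0"
  using assms unfolding column_stochastic_def chmap_def by (auto intro: sum_nonneg)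

lemma sum_chmap:
  assumes "column_stochastic W"
  shows "sum (chmap W R) UNIV = sum R UNIV"
proof -
  have "sum (chmap W R) UNIV = (\<Sum>x\<in>UNIV. (\<Sum>y\<in>UNIV. W y x) * R x)"
    unfolding chmap_def by (subst sum.swap) (simp add: sum_distrib_right)
  then show ?thesis
    using assms by (simp add: column_stochastic_def)
qed

lemma chmap_affine:
  "chmap W (\<lambda>x. Q x + \<epsilon> * (R x - Q x)) = (\<lambda>y. chmap W Q y + \<epsilon> * (chmap W R y - chmap W Q y))"
  by (auto simp: chmap_def algebra_simps sum.distrib sum_subtractf sum_distrib_left)

lemma is_pmf_convex_combination:
  assumes "is_pmf Q" and "is_pmf R" and "0 \<le> \<epsilon>" and "\<epsilon> \<le> 1"
  shows "is_pmf (\<lambda>x. Q x + \<epsilon> * (R x - Q x))"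
proof -
  have "Q x + \<epsilon> * (R x - Q x) = (1 - \<epsilon>) * Q x + \<epsilon> * R x" for x
    by (simp add: algebra_simps)
  then show ?thesis
    using assms by (auto simp: is_pmf_def sum.distrib sum_distrib_left[symmetric])
qed

lemma eta_chi2_le_eta_f:
  fixes PX :: "'x::finite \<Rightarrow> real" and W :: "'y::finite \<Rightarrow> 'x \<Rightarrow> real"
    and f f' :: "real \<Rightarrow> real"
  assumes PX: "\<forall>x. PX x > 0" "sum PX UNIV = 1"
    and W: "column_stochastic W" "\<forall>y. chmap W PX y > 0"
    and f: "e > 0" "\<forall>t\<in>ball 1 e. (f has_real_derivative f' t) (at t)"
      "(f' has_real_derivative f'') (at 1)" "f 1 = 0"
    and "f'' > 0"
  shows "eta_chi2 PX W \<le> eta_f f PX W"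
  unfolding eta_chi2_def contraction_def
proof (rule SUP_least)
  fix R
  assume "R \<in> {R. is_pmf R \<and> 0 < chi2div R PX}"
  then have "is_pmf R" and R: "\<forall>x. R x \<ge> 0" "sum R UNIV = 1" and "0 < chi2div R PX"
    by (auto simp: is_pmf_def)
  define R\<epsilon> where "R\<epsilon> \<epsilon> x = PX x + \<epsilon> * (R x - PX x)" for \<epsilon> x
  have input: "((\<lambda>\<epsilon>. fdiv f (R\<epsilon> \<epsilon>) PX / \<epsilon>^2) \<longlongrightarrow> f'' / 2 * chi2div R PX) (at_right 0)"
    unfolding R\<epsilon>_def using fdiv_perturbation_tendsto[OF PX(1) R(1) _ f] R(2) PX(2) by simp
  have "((\<lambda>\<epsilon>. fdiv f (chmap W (R\<epsilon> \<epsilon>)) (chmap W PX) / \<epsilon>^2)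
          \<longlongrightarrow> f'' / 2 * chi2div (chmap W R) (chmap W PX)) (at_right 0)"
    unfolding R\<epsilon>_def chmap_affine
    using fdiv_perturbation_tendsto[OF W(2) _ _ f] chmap_nonneg[OF W(1) R(1)] sum_chmap[OF W(1)]
      R(2) PX(2) by simp
  then have "((\<lambda>\<epsilon>. (fdiv f (chmap W (R\<epsilon> \<epsilon>)) (chmap W PX) / \<epsilon>^2) / (fdiv f (R\<epsilon> \<epsilon>) PX / \<epsilon>^2))
      \<longlongrightarrow> (f'' / 2 * chi2div (chmap W R) (chmap W PX)) / (f'' / 2 * chi2div R PX)) (at_right 0)"
    using input \<open>f'' > 0\<close> \<open>0 < chi2div R PX\<close> by (intro tendsto_divide) auto
  also have "(f'' / 2 * chi2div (chmap W R) (chmap W PX)) / (f'' / 2 * chi2div R PX)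
      = chi2div (chmap W R) (chmap W PX) / chi2div R PX"
    using \<open>f'' > 0\<close> by simp
  finally have ratio: "((\<lambda>\<epsilon>. fdiv f (chmap W (R\<epsilon> \<epsilon>)) (chmap W PX) / fdiv f (R\<epsilon> \<epsilon>) PX)
      \<longlongrightarrow> chi2div (chmap W R) (chmap W PX) / chi2div R PX) (at_right 0)"
    by (rule Lim_transform_eventually) (rule eventually_mono[OF eventually_at_right_less], simp)
  have "eventually (\<lambda>\<epsilon>. fdiv f (R\<epsilon> \<epsilon>) PX / \<epsilon>^2 > 0) (at_right 0)"
    using order_tendstoD(1)[OF input] \<open>f'' > 0\<close> \<open>0 < chi2div R PX\<close> by simp
  then have "eventually (\<lambda>\<epsilon>. ereal (fdiv f (chmap W (R\<epsilon> \<epsilon>)) (chmap W PX) / fdiv f (R\<epsilon> \<epsilon>) PX)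
               \<le> eta_f f PX W) (at_right 0)"
    using eventually_at_right_real[OF zero_less_one]
  proof eventually_elim
    case (elim \<epsilon>)
    then have "is_pmf (R\<epsilon> \<epsilon>)" and "0 < fdiv f (R\<epsilon> \<epsilon>) PX"
      using is_pmf_convex_combination[OF _ \<open>is_pmf R\<close>, of PX \<epsilon>] PX
      by (auto simp: R\<epsilon>_def is_pmf_def less_imp_le zero_less_divide_iff)
    then show ?case
      unfolding eta_f_def contraction_def by (intro SUP_upper) auto
  qed
  then show "ereal (chi2div (chmap W R) (chmap W PX) / chi2div R PX) \<le> eta_f f PX W"
    by (rule tendsto_le[OF trivial_limit_at_right_real tendsto_const tendsto_ereal[OF ratio]])
qed

lemma eta_f_le_scaled_eta_chi2:
  fixes PX :: "'x::finite \<Rightarrow> real" and W :: "'y::finite \<Rightarrow> 'x \<Rightarrow> real"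
  assumes PX: "\<forall>x. PX x > 0" "sum PX UNIV = 1"
    and W: "column_stochastic W" "\<forall>y. chmap W PX y > 0"
    and "a > 0"
    and lower: "\<And>t. t \<ge> 0 \<Longrightarrow> 0 \<le> fext f t - k * (t - 1)"
    and cubic: "\<And>t. t \<ge> 0 \<Longrightarrow> a / 2 * (t - 1)^2 \<le> (fext f t - k * (t - 1)) * (1 - c * (t - 1))"
    and upper: "\<And>t. t \<ge> 0 \<Longrightarrow> fext f t - k * (t - 1) \<le> K * (t - 1)^2"
  shows "eta_f f PX W \<le> ereal (K / (a * Min (range PX))) * eta_chi2 PX W"
  unfolding eta_f_def contraction_def
proof (rule SUP_least)
  fix R
  assume "R \<in> {R. is_pmf R \<and> 0 < fdiv f R PX}"
  then have R: "\<forall>x. R x \<ge> 0" "sum R UNIV = 1" and "0 < fdiv f R PX"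
    by (auto simp: is_pmf_def)
  define m where "m = Min (range PX)"
  have "m \<in> range PX"
    unfolding m_def by (intro Min_in) auto
  then have m: "m > 0" "\<forall>x. m \<le> PX x"
    using PX(1) by (auto simp: m_def)
  have "K \<ge> 0"
    using lower[of 0] upper[of 0] by simp
  have input_lower: "a * m * chi2div R PX \<le> fdiv f R PX"
    by (rule chi2div_le_fdiv[OF PX m(2,1) R \<open>a > 0\<close> lower cubic])
  have "fdiv f R PX \<le> K * chi2div R PX"
    using fdiv_le_chi2div[OF PX(1) R(1) _ upper] R(2) PX(2) by simp
  then have "chi2div R PX > 0"
    using \<open>0 < fdiv f R PX\<close> \<open>K \<ge> 0\<close> chi2div_nonneg[OF PX(1), of R]
    by (smt (verit) mult_nonneg_nonpos)
  have output_upper: "fdiv f (chmap W R) (chmap W PX) \<le> K * chi2div (chmap W R) (chmap W PX)"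
    using fdiv_le_chi2div[OF W(2) _ _ upper] chmap_nonneg[OF W(1) R(1)] sum_chmap[OF W(1)] R(2) PX(2)
    by simp
  have "fdiv f (chmap W R) (chmap W PX) / fdiv f R PX
      \<le> K * chi2div (chmap W R) (chmap W PX) / fdiv f R PX"
    using output_upper \<open>0 < fdiv f R PX\<close> by (intro divide_right_mono) auto
  also have "\<dots> \<le> K * chi2div (chmap W R) (chmap W PX) / (a * m * chi2div R PX)"
    using input_lower \<open>a > 0\<close> m(1) \<open>K \<ge> 0\<close> \<open>chi2div R PX > 0\<close> \<open>0 < fdiv f R PX\<close>
      chi2div_nonneg[OF W(2)]
    by (intro divide_left_mono) (auto intro!: mult_pos_pos)
  also have "\<dots> = K / (a * m) * (chi2div (chmap W R) (chmap W PX) / chi2div R PX)"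
    by simp
  finally have "ereal (fdiv f (chmap W R) (chmap W PX) / fdiv f R PX)
      \<le> ereal (K / (a * m)) * ereal (chi2div (chmap W R) (chmap W PX) / chi2div R PX)"
    by simp
  also have "\<dots> \<le> ereal (K / (a * m)) * eta_chi2 PX W"
    using \<open>chi2div R PX > 0\<close> R \<open>a > 0\<close> m(1) \<open>K \<ge> 0\<close>
    unfolding eta_chi2_def contraction_def
    by (intro ereal_mult_left_mono SUP_upper) (auto simp: is_pmf_def)
  finally show "ereal (fdiv f (chmap W R) (chmap W PX) / fdiv f R PX)
      \<le> ereal (K / (a * Min (range PX))) * eta_chi2 PX W"
    by (simp add: m_def)
qed

theorem theorem4:
  fixes P :: "'x::finite \<Rightarrow> 'y::finite \<Rightarrow> real"
    and f d1 d2 :: "real \<Rightarrow> real" and d3 e :: real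
  assumes "CARD('x) \<ge> 2" and "CARD('y) \<ge> 2"
    and "\<forall>x y. 0 \<le> P x y" and "(\<Sum>x\<in>UNIV. \<Sum>y\<in>UNIV. P x y) = 1"
    and "\<forall>x. marg_X P x > 0" and "\<forall>y. marg_Y P y > 0"
    and "convex_on {0<..} f"
    and "strictly_convex_at_1 f"
    and "e > 0"
    and "\<forall>t\<in>ball 1 e. (f has_real_derivative d1 t) (at t) \<and> (d1 has_real_derivative d2 t) (at t)"
    and "(d2 has_real_derivative d3) (at 1)"
    and "f 1 = 0" and "d2 1 > 0"
    and "\<forall>t>0. (f t - d1 1 * (t - 1)) * (1 - d3 / (3 * d2 1) * (t - 1)) \<ge> d2 1 / 2 * (t - 1)^2"
    and "\<exists>L. (f \<longlongrightarrow> L) (at_right 0)"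
    and "concave_on {0<..} (\<lambda>x. (f x - fzero f) / x)"
  shows "eta_chi2 (marg_X P) (channel P) \<le> eta_f f (marg_X P) (channel P)
       \<and> eta_f f (marg_X P) (channel P)
           \<le> ereal ((d1 1 + fzero f) / (d2 1 * Min (range (marg_X P)))) * eta_chi2 (marg_X P) (channel P)"
proof -
  have f'': "\<forall>t\<in>ball 1 e. (f has_real_derivative d1 t) (at t)" "(d1 has_real_derivative d2 1) (at 1)"
    and f'_1: "(f has_real_derivative d1 1) (at 1)"
    using assms(9,10) by auto
  have f_0: "(f \<longlongrightarrow> fzero f) (at_right 0)"
    using tendsto_fzero[OF assms(15)] .
  have PX: "\<forall>x. marg_X P x > 0" "sum (marg_X P) UNIV = 1"
    using assms(4,5) by (simp_all add: marg_X_def)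
  have W: "column_stochastic (channel P)" "\<forall>y. chmap (channel P) (marg_X P) y > 0"
    using column_stochastic_channel[OF assms(3,5)] chmap_channel_marg_X[OF assms(5)] assms(6) by simp_all
  have tangent: "0 \<le> fext f t - d1 1 * (t - 1)" if "t \<ge> 0" for t
    using fext_ge_tangent[OF assms(7) f'_1 f_0 that] assms(12) by simp
  show ?thesis
    using eta_chi2_le_eta_f[OF PX W assms(9) f'' assms(12,13)]
      eta_f_le_scaled_eta_chi2[OF PX W assms(13) tangent
        fext_cubic_lower_bound[OF f_0 assms(14)[rule_format]] fext_le_quadratic[OF assms(16) f'_1 assms(12)]]
    by simp
qed

end
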